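(* Let $A$ be a commutative noetherian local ring and let $x,y\in A$ be an exact pair of zero divisors. Then the following are equivalent: (i) $x$ is regular on $A/(y)$; (ii) $y$ is regular on $A/(x)$; (iii) $(x)\cap(y)=0$.
   Context: Two non-units $x,y\in A$ form an exact pair of zero divisors if $\operatorname{Ann}_A(x)=(y)$ and $\operatorname{Ann}_A(y)=(x)$. An element $a\in A$ is regular on a finitely generated $A$-module $M$ if $a$ is a non-unit and multiplication by $a$ on $M$ is injective. *)

theory Defs
  imports "HOL-Algebra.Algebra"
begin

definition local_ring :: "('a, 'b) ring_scheme \<Rightarrow> bool" where
  "local_ring R \<longleftrightarrow> (\<exists>!M. maximalideal M R)"

definition ann :: "('a, 'b) ring_scheme \<Rightarrow> 'a \<Rightarrow> 'a set" where
  "ann R x = {a \<in> carrier R. a \<otimes>\<^bsub>R\<^esub> x = \<zero>\<^bsub>R\<^esub>}"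

definition exact_zero_divisors :: "('a, 'b) ring_scheme \<Rightarrow> 'a \<Rightarrow> 'a \<Rightarrow> bool" where
  "exact_zero_divisors R x y \<longleftrightarrow>
     x \<in> carrier R \<and> y \<in> carrier R \<and> x \<notin> Units R \<and> y \<notin> Units R \<and>
     ann R x = PIdl\<^bsub>R\<^esub> y \<and> ann R y = PIdl\<^bsub>R\<^esub> x"

text \<open>a is regular on the cyclic module R/I: a is a non-unit and multiplication by a
  on R/I is injective, i.e. a*b in I implies b in I.\<close>
definition regular_on_quot :: "('a, 'b) ring_scheme \<Rightarrow> 'a \<Rightarrow> 'a set \<Rightarrow> bool" where
  "regular_on_quot R a I \<longleftrightarrow>
     a \<in> carrier R \<and> a \<notin> Units R \<and>
     (\<forall>b \<in> carrier R. a \<otimes>\<^bsub>R\<^esub> b \<in> I \<longrightarrow> b \<in> I)"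

end

theory Submission
  imports Defs
begin

text \<open>Applying this to both \<open>x\<close> and \<open>y\<close> gives
  (i) \<open>\<longleftrightarrow>\<close> (iii) \<open>\<longleftrightarrow>\<close> (ii).\<close>

lemma (in cring) regular_on_quot_ann_iff:
  assumes x: "x \<in> carrier R" "x \<notin> Units R" and ann: "ann R x = I"
  shows "regular_on_quot R x I \<longleftrightarrow> PIdl x \<inter> I = {\<zero>}"
proof
  assume regular: "regular_on_quot R x I"
  show "PIdl x \<inter> I = {\<zero>}"
  proof (intro equalityI subsetI)
    fix z assume z: "z \<in> PIdl x \<inter> I"
    then obtain b where b: "b \<in> carrier R" "z = b \<otimes> x"
      unfolding cgenideal_def by auto
    with z x have "x \<otimes> b \<in> I" by (simp add: m_comm)
    with regular b have "b \<in> ann R x" unfolding regular_on_quot_def ann by blast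
    with b show "z \<in> {\<zero>}" unfolding ann_def by simp
  next
    fix z assume "z \<in> {\<zero>}"
    moreover have "\<zero> \<in> PIdl x"
      using cgenideal_ideal[OF x(1)] by (simp add: additive_subgroup.zero_closed ideal_def)
    moreover have "\<zero> \<in> I" using x unfolding ann[symmetric] ann_def by simp
    ultimately show "z \<in> PIdl x \<inter> I" by simp
  qed
next
  assume disjoint: "PIdl x \<inter> I = {\<zero>}"
  show "regular_on_quot R x I"
    unfolding regular_on_quot_def
  proof (intro conjI ballI impI)
    fix b assume b: "b \<in> carrier R" and xb: "x \<otimes> b \<in> I"
    have "x \<otimes> b \<in> PIdl x" unfolding cgenideal_def using b x by (auto simp: m_comm)
    with xb disjoint b x have "b \<otimes> x = \<zero>" by (auto simp: m_comm)
    with b show "b \<in> I" unfolding ann[symmetric] ann_def by simp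
  qed (use x in auto)
qed

theorem lemma2p2:
  fixes A (structure)
  assumes "cring A" and "noetherian_ring A" and "local_ring A"
    and "exact_zero_divisors A x y"
  shows "(regular_on_quot A x (PIdl y) \<longleftrightarrow> regular_on_quot A y (PIdl x)) \<and>
         (regular_on_quot A y (PIdl x) \<longleftrightarrow> PIdl x \<inter> PIdl y = {\<zero>})"
proof -
  interpret cring A by (fact assms(1))
  have xy: "x \<in> carrier A" "y \<in> carrier A" "x \<notin> Units A" "y \<notin> Units A"
    "ann A x = PIdl y" "ann A y = PIdl x"
    using assms(4) unfolding exact_zero_divisors_def by auto
  have "regular_on_quot A x (PIdl y) \<longleftrightarrow> PIdl x \<inter> PIdl y = {\<zero>}"
    using regular_on_quot_ann_iff[OF xy(1,3,5)] .
  moreover have "regular_on_quot A y (PIdl x) \<longleftrightarrow> PIdl y \<inter> PIdl x = {\<zero>}"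
    using regular_on_quot_ann_iff[OF xy(2,4,6)] .
  ultimately show ?thesis by (simp add: Int_commute)
qed

end
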